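(* Let $\Gamma\curvearrowright X, I$ be an almost simple dynamical ideal. Then in the associated permutation model $W[[X]]$, the union of any well-orderable set of well-orderable sets is well-orderable.
   Context: Work in ZFC. $V[[X]]$ is the well-founded model of ZFCA with set of atoms exactly $X$ in which every set of elements is represented by an element; a group action of $\Gamma$ on $X$ extends to $V[[X]]$ by $\gamma\cdot A=\{\gamma\cdot B:B\in A\}$. $\mathrm{stab}(A)=\{\gamma:\gamma\cdot A=A\}$, $\mathrm{pstab}(a)=\{\gamma:\gamma\cdot B=B\ \forall B\in a\}$. A dynamical ideal $\Gamma\curvearrowright X, I$: a group $\Gamma$ acting on $X$ and a $\Gamma$-invariant ideal $I$ on $X$ containing all singletons. Its permutation model $W[[X]]$ is the class of $A\in V[[X]]$ such that $A$ and every element of its transitive closure are symmetric, where $A$ is symmetric if $\mathrm{pstab}(b)\subseteq\mathrm{stab}(A)$ for some $b\in I$. The dynamical ideal is simple if for all $a\subseteq b$ in $I$, the only normal subgroup of $\mathrm{pstab}(a)$ containing $\mathrm{pstab}(b)$ is $\mathrm{pstab}(a)$ itself; it is almost simple if every set in $I$ has a superset $a\in I$ such that for every $b\in I$ with $a\subseteq b$, the only normal subgroup of $\mathrm{pstab}(a)$ containing $\mathrm{pstab}(b)$ is $\mathrm{pstab}(a)$. *)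

theory Defs
  imports "HOL-Algebra.Group_Action"
begin

section \<open>Sets with atoms: a model of V[[X]] (hereditarily of size at most |'k|)\<close>

text \<open>Well-founded trees: a leaf is an atom; a node Node K f denotes the set
  of the denotations of f k for k in K.\<close>

datatype ('a, 'k) tree = Atom 'a | Node "'k set" "'k \<Rightarrow> ('a, 'k) tree"

inductive teq :: "('a, 'k) tree \<Rightarrow> ('a, 'k) tree \<Rightarrow> bool" where
  teq_Atom: "teq (Atom a) (Atom a)"
| teq_Node: "\<lbrakk>\<forall>k\<in>K. \<exists>l\<in>L. teq (f k) (g l); \<forall>l\<in>L. \<exists>k\<in>K. teq (f k) (g l)\<rbrakk>
     \<Longrightarrow> teq (Node K f) (Node L g)"

lemma teq_refl: "teq t t"
proof (induction t)
  case (Atom a) then show ?case by (rule teq_Atom)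
next
  case (Node K f) then show ?case by (auto intro!: teq_Node)
qed

lemma teq_sym: "teq s t \<Longrightarrow> teq t s"
  by (induction rule: teq.induct) (auto intro!: teq.intros)

lemma teq_trans: "teq s t \<Longrightarrow> teq t u \<Longrightarrow> teq s u"
proof (induction arbitrary: u rule: teq.induct)
  case (teq_Atom a) then show ?case by simp
next
  case (teq_Node K L f g)
  from teq_Node.prems obtain M h where u: "u = Node M h"
    and h1: "\<forall>l\<in>L. \<exists>m\<in>M. teq (g l) (h m)" and h2: "\<forall>m\<in>M. \<exists>l\<in>L. teq (g l) (h m)"
    by (cases rule: teq.cases) auto
  show ?case unfolding u
  proof (rule teq.teq_Node)
    show "\<forall>k\<in>K. \<exists>m\<in>M. teq (f k) (h m)"
      using teq_Node.IH(1) h1 by fast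
    show "\<forall>m\<in>M. \<exists>k\<in>K. teq (f k) (h m)"
      using teq_Node.IH(2) h2 by fast
  qed
qed

lemma equivp_teq: "equivp teq"
  by (rule equivpI) (auto simp: reflp_def symp_def transp_def intro: teq_refl teq_sym teq_trans)

quotient_type ('a, 'k) hs = "('a, 'k) tree" / teq
  by (rule equivp_teq)

primrec tmem :: "('a, 'k) tree \<Rightarrow> ('a, 'k) tree \<Rightarrow> bool" where
  "tmem s (Atom a) = False"
| "tmem s (Node K f) = (\<exists>k\<in>K. teq s (f k))"

lemma tmem_resp:
  assumes "teq s s'" "teq t t'" shows "tmem s t = tmem s' t'"
  using assms(2)
proof cases
  case (teq_Atom a) then show ?thesis by simp
next
  case (teq_Node K L f g)
  then show ?thesis using assms(1)
    by simp (meson teq_sym teq_trans)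
qed

lift_definition hs_mem :: "('a, 'k) hs \<Rightarrow> ('a, 'k) hs \<Rightarrow> bool" is tmem
  using tmem_resp by blast

primrec tis_atom :: "('a, 'k) tree \<Rightarrow> bool" where
  "tis_atom (Atom a) = True"
| "tis_atom (Node K f) = False"

lift_definition is_atom :: "('a, 'k) hs \<Rightarrow> bool" is tis_atom
  by (erule teq.cases) auto

primrec tatoms :: "('a, 'k) tree \<Rightarrow> 'a set" where
  "tatoms (Atom a) = {a}"
| "tatoms (Node K f) = (\<Union>k\<in>K. tatoms (f k))"

lemma tatoms_resp: "teq s t \<Longrightarrow> tatoms s = tatoms t"
  by (induction rule: teq.induct) (simp, fastforce)

lift_definition hs_atoms :: "('a, 'k) hs \<Rightarrow> 'a set" is tatoms
  by (rule tatoms_resp)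

primrec tact :: "('a \<Rightarrow> 'a) \<Rightarrow> ('a, 'k) tree \<Rightarrow> ('a, 'k) tree" where
  "tact h (Atom a) = Atom (h a)"
| "tact h (Node K f) = Node K (\<lambda>k. tact h (f k))"

lemma tact_resp: "teq s t \<Longrightarrow> teq (tact h s) (tact h t)"
  by (induction rule: teq.induct) (auto intro!: teq.intros)

lift_definition hs_act :: "('a \<Rightarrow> 'a) \<Rightarrow> ('a, 'k) hs \<Rightarrow> ('a, 'k) hs" is tact
  by (rule tact_resp)

definition elems :: "('a, 'k) hs \<Rightarrow> ('a, 'k) hs set" where
  "elems A = {B. hs_mem B A}"

definition inV :: "'a set \<Rightarrow> ('a, 'k) hs \<Rightarrow> bool" where
  "inV X A \<longleftrightarrow> hs_atoms A \<subseteq> X"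

definition pstab :: "('g, 'b) monoid_scheme \<Rightarrow> ('g \<Rightarrow> 'a \<Rightarrow> 'a) \<Rightarrow> 'a set \<Rightarrow> 'g set" where
  "pstab G \<phi> a = {g \<in> carrier G. \<forall>x\<in>a. \<phi> g x = x}"

definition stab :: "('g, 'b) monoid_scheme \<Rightarrow> ('g \<Rightarrow> 'a \<Rightarrow> 'a) \<Rightarrow> ('a, 'k) hs \<Rightarrow> 'g set" where
  "stab G \<phi> A = {g \<in> carrier G. hs_act (\<phi> g) A = A}"

definition dynamical_ideal ::
  "('g, 'b) monoid_scheme \<Rightarrow> 'a set \<Rightarrow> ('g \<Rightarrow> 'a \<Rightarrow> 'a) \<Rightarrow> 'a set set \<Rightarrow> bool" where
  "dynamical_ideal G X \<phi> I \<longleftrightarrow>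
     group G \<and> group_action G X \<phi> \<and>
     I \<subseteq> Pow X \<and>
     (\<forall>a\<in>I. \<forall>b. b \<subseteq> a \<longrightarrow> b \<in> I) \<and>
     (\<forall>a\<in>I. \<forall>b\<in>I. a \<union> b \<in> I) \<and>
     (\<forall>x\<in>X. {x} \<in> I) \<and>
     (\<forall>g\<in>carrier G. \<forall>a\<in>I. \<phi> g ` a \<in> I)"

definition good_set ::
  "('g, 'b) monoid_scheme \<Rightarrow> ('g \<Rightarrow> 'a \<Rightarrow> 'a) \<Rightarrow> 'a set set \<Rightarrow> 'a set \<Rightarrow> bool" where
  "good_set G \<phi> I a \<longleftrightarrow>
     (\<forall>b\<in>I. a \<subseteq> b \<longrightarrow>
        (\<forall>N. N \<lhd> (G\<lparr>carrier := pstab G \<phi> a\<rparr>) \<and> pstab G \<phi> b \<subseteq> N \<longrightarrow> N = pstab G \<phi> a))"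

definition almost_simple ::
  "('g, 'b) monoid_scheme \<Rightarrow> 'a set \<Rightarrow> ('g \<Rightarrow> 'a \<Rightarrow> 'a) \<Rightarrow> 'a set set \<Rightarrow> bool" where
  "almost_simple G X \<phi> I \<longleftrightarrow> dynamical_ideal G X \<phi> I \<and>
     (\<forall>c\<in>I. \<exists>a\<in>I. c \<subseteq> a \<and> good_set G \<phi> I a)"

definition symmetric ::
  "('g, 'b) monoid_scheme \<Rightarrow> ('g \<Rightarrow> 'a \<Rightarrow> 'a) \<Rightarrow> 'a set set \<Rightarrow> ('a, 'k) hs \<Rightarrow> bool" where
  "symmetric G \<phi> I A \<longleftrightarrow> (\<exists>b\<in>I. pstab G \<phi> b \<subseteq> stab G \<phi> A)"

definition inW ::
  "('g, 'b) monoid_scheme \<Rightarrow> 'a set \<Rightarrow> ('g \<Rightarrow> 'a \<Rightarrow> 'a) \<Rightarrow> 'a set set \<Rightarrow> ('a, 'k) hs \<Rightarrow> bool" where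
  "inW G X \<phi> I A \<longleftrightarrow> inV X A \<and> symmetric G \<phi> I A \<and>
     (\<forall>B. (B, A) \<in> {(x, y). hs_mem x y}\<^sup>+ \<longrightarrow> symmetric G \<phi> I B)"

definition is_kpair :: "('a, 'k) hs \<Rightarrow> ('a, 'k) hs \<Rightarrow> ('a, 'k) hs \<Rightarrow> bool" where
  "is_kpair p u v \<longleftrightarrow> \<not> is_atom p \<and>
     elems p = {z. \<not> is_atom z \<and> (elems z = {u} \<or> elems z = {u, v})}"

definition rel_on :: "('a, 'k) hs \<Rightarrow> ('a, 'k) hs \<Rightarrow> (('a, 'k) hs \<times> ('a, 'k) hs) set" where
  "rel_on R S = {(u, v). u \<in> elems S \<and> v \<in> elems S \<and> (\<exists>p\<in>elems R. is_kpair p u v)}"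

definition wo_in_W ::
  "('g, 'b) monoid_scheme \<Rightarrow> 'a set \<Rightarrow> ('g \<Rightarrow> 'a \<Rightarrow> 'a) \<Rightarrow> 'a set set \<Rightarrow> ('a, 'k) hs \<Rightarrow> bool" where
  "wo_in_W G X \<phi> I S \<longleftrightarrow> \<not> is_atom S \<and>
     (\<exists>R. inW G X \<phi> I R \<and> well_order_on (elems S) (rel_on R S))"

end

theory Submission
  imports Defs
begin

text \<open>Choose a good set a in I that supports both A and a well-order of A. Since a well-ordered
  set has no nontrivial order automorphisms, pstab(a) fixes every B in A. For such B, the
  pointwise stabiliser of B in pstab(a) is normal in pstab(a), and it contains pstab(d) for any
  d \<supseteq> a supporting B and a well-order of B; goodness of a forces it to be all of pstab(a).
  Hence pstab(a) fixes the union pointwise, so any well-order of the union, coded as a set of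
  Kuratowski pairs, is fixed by pstab(a) and lies in W[[X]].\<close>

lemma abs_rep_hs [simp]: "abs_hs (rep_hs x) = x"
  by (rule Quotient3_abs_rep[OF Quotient3_hs])

lemma hs_cases: obtains a where "x = abs_hs (Atom a)" | K f where "x = abs_hs (Node K f)"
  by (metis abs_rep_hs tree.exhaust)

lemma elems_Atom [simp]: "elems (abs_hs (Atom a)) = {}"
  unfolding elems_def by (metis (no_types) abs_rep_hs empty_Collect_eq hs_mem.abs_eq tmem.simps(1))

lemma elems_Node: "elems (abs_hs (Node K f)) = (\<lambda>k. abs_hs (f k)) ` K"
proof -
  have "hs_mem z (abs_hs (Node K f)) \<longleftrightarrow> (\<exists>k\<in>K. z = abs_hs (f k))" for z
    using hs_mem.abs_eq[of "rep_hs z" "Node K f"] hs.abs_eq_iff[of "rep_hs z"] by simp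
  then show ?thesis unfolding elems_def by auto
qed

lemma is_atom_Atom [simp]: "is_atom (abs_hs (Atom a))"
  by (simp add: is_atom.abs_eq)

lemma is_atom_Node [simp]: "\<not> is_atom (abs_hs (Node K f))"
  by (simp add: is_atom.abs_eq)

lemma hs_set_cases:
  assumes "\<not> is_atom x" obtains K f where "x = abs_hs (Node K f)"
  using assms by (cases x rule: hs_cases) auto

lemma elems_atom: "is_atom x \<Longrightarrow> elems x = {}"
  by (cases x rule: hs_cases) auto

lemma hs_eqI:
  assumes "\<not> is_atom x" "\<not> is_atom y" "elems x = elems y" shows "x = y"
proof -
  obtain K f where x: "x = abs_hs (Node K f)" using assms(1) by (rule hs_set_cases)
  obtain L g where y: "y = abs_hs (Node L g)" using assms(2) by (rule hs_set_cases)
  have e: "(\<lambda>k. abs_hs (f k)) ` K = (\<lambda>k. abs_hs (g k)) ` L"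
    using assms(3) x y elems_Node by metis
  have "teq (Node K f) (Node L g)"
    by (rule teq_Node) (use e in \<open>metis (no_types, lifting) hs.abs_eq_iff image_iff\<close>)+
  then show ?thesis using x y hs.abs_eq_iff by blast
qed

lemma ex_hs_set:
  "S \<subseteq> range (F :: 'k \<Rightarrow> ('a, 'k) hs) \<Longrightarrow> \<exists>x :: ('a, 'k) hs. \<not> is_atom x \<and> elems x = S"
  by (rule exI[of _ "abs_hs (Node (F -` S) (\<lambda>k. rep_hs (F k)))"])
    (auto simp: elems_Node image_vimage_eq)

lemma elems_eq_image: obtains K and F :: "'k \<Rightarrow> ('a, 'k) hs" where "elems (x :: ('a, 'k) hs) = F ` K"
proof (cases x rule: hs_cases)
  case (1 a) then show ?thesis using that by (metis elems_Atom image_empty)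
next
  case (2 K f) then show ?thesis using that by (simp add: elems_Node)
qed

lemma mem_elems_iff: "hs_mem y x \<longleftrightarrow> y \<in> elems x"
  by (simp add: elems_def)

lemma hs_atoms_elems: "\<not> is_atom x \<Longrightarrow> hs_atoms x = (\<Union>y\<in>elems x. hs_atoms y)"
  by (erule hs_set_cases) (simp add: elems_Node hs_atoms.abs_eq)

lemma hs_atoms_mono: "y \<in> elems x \<Longrightarrow> hs_atoms y \<subseteq> hs_atoms x"
  by (metis UN_upper elems_atom empty_iff hs_atoms_elems)

lemma inV_elem: "inV X x \<Longrightarrow> y \<in> elems x \<Longrightarrow> inV X y"
  unfolding inV_def using hs_atoms_mono by blast

lemma inV_setI: "\<not> is_atom x \<Longrightarrow> \<forall>y\<in>elems x. inV X y \<Longrightarrow> inV X x"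
  unfolding inV_def using hs_atoms_elems by fastforce

lemma tact_comp: "tact h (tact h' t) = tact (h \<circ> h') t"
  by (induction t) auto

lemma tact_ident: "tact (\<lambda>x. x) t = t"
  by (induction t) auto

lemma tact_cong: "\<forall>a\<in>tatoms t. h a = h' a \<Longrightarrow> teq (tact h t) (tact h' t)"
  by (induction t) (auto intro!: teq.intros)

lemma tatoms_tact: "tatoms (tact h t) = h ` tatoms t"
  by (induction t) auto

lemma hs_act_comp: "hs_act h (hs_act h' x) = hs_act (h \<circ> h') x"
  by (cases x rule: hs_cases) (simp_all add: hs_act.abs_eq tact_comp del: tact.simps)

lemma hs_act_ident: "hs_act (\<lambda>x. x) x = x"
  by (metis abs_rep_hs hs_act.abs_eq tact_ident)

lemma hs_act_cong: "\<forall>a\<in>hs_atoms x. h a = h' a \<Longrightarrow> hs_act h x = hs_act h' x"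
  by (metis abs_rep_hs hs.abs_eq_iff hs_act.abs_eq hs_atoms.abs_eq tact_cong)

lemma hs_atoms_hs_act: "hs_atoms (hs_act h x) = h ` hs_atoms x"
  by (metis abs_rep_hs hs_act.abs_eq hs_atoms.abs_eq tatoms_tact)

lemma is_atom_hs_act [simp]: "is_atom (hs_act h x) = is_atom x"
  by (cases x rule: hs_cases) (simp_all add: hs_act.abs_eq)

lemma elems_hs_act: "elems (hs_act h x) = hs_act h ` elems x"
  by (cases x rule: hs_cases) (simp_all add: hs_act.abs_eq elems_Node image_image)

lemma hs_act_fixed_setI: "\<not> is_atom x \<Longrightarrow> \<forall>y\<in>elems x. hs_act h y = y \<Longrightarrow> hs_act h x = x"
  by (rule hs_eqI) (auto simp: elems_hs_act)

definition hs_sing :: "('a, 'k) hs \<Rightarrow> ('a, 'k) hs" where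
  "hs_sing u = (SOME z. \<not> is_atom z \<and> elems z = {u})"

text \<open>Junk unless 'k has at least two elements, which is why every lemma about
  hs_pair assumes 'k infinite.\<close>

definition hs_pair :: "('a, 'k) hs \<Rightarrow> ('a, 'k) hs \<Rightarrow> ('a, 'k) hs" where
  "hs_pair u v = (SOME z. \<not> is_atom z \<and> elems z = {u, v})"

definition hs_kpair :: "('a, 'k) hs \<Rightarrow> ('a, 'k) hs \<Rightarrow> ('a, 'k) hs" where
  "hs_kpair u v = hs_pair (hs_sing u) (hs_pair u v)"

lemma ex_hs_pair:
  assumes "infinite (UNIV :: 'k set)" shows "\<exists>z :: ('a, 'k) hs. \<not> is_atom z \<and> elems z = {u, v}"
proof -
  obtain k0 k1 :: 'k where "k0 \<noteq> k1"
    using ex_new_if_finite[OF assms, of "{undefined}"] by auto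
  then have "{u, v} \<subseteq> range (\<lambda>k. if k = k0 then u else v)" by auto
  then show ?thesis by (rule ex_hs_set)
qed

lemma hs_sing_props: "\<not> is_atom (hs_sing u) \<and> elems (hs_sing u :: ('a, 'k) hs) = {u}"
  unfolding hs_sing_def by (rule someI_ex, rule ex_hs_set[of _ "\<lambda>_. u"]) auto

lemma hs_pair_props:
  "infinite (UNIV :: 'k set) \<Longrightarrow>
   \<not> is_atom (hs_pair u v) \<and> elems (hs_pair u v :: ('a, 'k) hs) = {u, v}"
  unfolding hs_pair_def by (rule someI_ex, rule ex_hs_pair)

lemma hs_set_eq_iff: "\<not> is_atom x \<Longrightarrow> \<not> is_atom y \<Longrightarrow> x = y \<longleftrightarrow> elems x = elems y"
  using hs_eqI by blast

lemma hs_sing_eq_hs_pair_iff: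
  assumes "infinite (UNIV :: 'k set)"
  shows "hs_sing u = (hs_pair v w :: ('a, 'k) hs) \<longleftrightarrow> v = u \<and> w = u"
proof -
  have "hs_sing u = (hs_pair v w :: ('a, 'k) hs) \<longleftrightarrow> {u} = {v, w}"
    using hs_set_eq_iff hs_sing_props hs_pair_props[OF assms] by metis
  then show ?thesis by auto
qed

lemma hs_pair_eq_iff:
  assumes "infinite (UNIV :: 'k set)"
  shows "hs_pair u v = (hs_pair u' v' :: ('a, 'k) hs) \<longleftrightarrow> {u, v} = {u', v'}"
  using hs_set_eq_iff hs_pair_props[OF assms] by metis

lemma hs_sing_inject: "hs_sing u = hs_sing v \<longleftrightarrow> u = v"
  using hs_sing_props by (metis singleton_inject)

lemma hs_kpair_inject:
  assumes "infinite (UNIV :: 'k set)"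
  shows "hs_kpair u v = (hs_kpair u' v' :: ('a, 'k) hs) \<longleftrightarrow> u = u' \<and> v = v'"
proof
  assume "hs_kpair u v = hs_kpair u' v'"
  then have "{hs_sing u, hs_pair u v} = {hs_sing u', hs_pair u' v'}"
    unfolding hs_kpair_def by (simp add: hs_pair_eq_iff[OF assms])
  then have "(u = u' \<and> {u, v} = {u', v'}) \<or> (u' = u \<and> v' = u \<and> u = u' \<and> v = u')"
    by (simp add: doubleton_eq_iff hs_sing_inject hs_pair_eq_iff[OF assms] hs_sing_eq_hs_pair_iff[OF assms]
        eq_commute[of "hs_pair _ _" "hs_sing _"])
  then show "u = u' \<and> v = v'" by (auto simp: doubleton_eq_iff)
qed simp

lemma is_kpair_iff:
  assumes "infinite (UNIV :: 'k set)"
  shows "is_kpair p u v \<longleftrightarrow> p = (hs_kpair u v :: ('a, 'k) hs)"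
proof -
  have "z = hs_sing u \<longleftrightarrow> elems z = {u}" "z = hs_pair u v \<longleftrightarrow> elems z = {u, v}"
    if "\<not> is_atom z" for z :: "('a, 'k) hs"
    using that hs_set_eq_iff hs_sing_props hs_pair_props[OF assms] by metis+
  then have "{z. \<not> is_atom z \<and> (elems z = {u} \<or> elems z = {u, v})} = {hs_sing u, hs_pair u v}"
    using hs_sing_props hs_pair_props[OF assms] by blast
  also have "\<dots> = elems (hs_kpair u v)"
    using hs_pair_props[OF assms, of "hs_sing u" "hs_pair u v"] by (simp add: hs_kpair_def)
  finally have "{z. \<not> is_atom z \<and> (elems z = {u} \<or> elems z = {u, v})} = elems (hs_kpair u v)" .
  then show ?thesis
    unfolding is_kpair_def using hs_set_eq_iff hs_pair_props[OF assms] by (metis hs_kpair_def)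
qed

lemma rel_on_hs_kpair:
  "infinite (UNIV :: 'k set) \<Longrightarrow>
   rel_on R S = {(u, v). u \<in> elems S \<and> v \<in> elems S \<and> hs_kpair u v \<in> elems (R :: ('a, 'k) hs)}"
  unfolding rel_on_def by (simp add: is_kpair_iff)

lemma hs_act_hs_sing: "hs_act h (hs_sing u) = hs_sing (hs_act h u)"
  by (rule hs_eqI) (simp_all add: hs_sing_props elems_hs_act)

lemma hs_act_hs_pair:
  "infinite (UNIV :: 'k set) \<Longrightarrow>
   hs_act h (hs_pair u v) = (hs_pair (hs_act h u) (hs_act h v) :: ('a, 'k) hs)"
  by (rule hs_eqI) (simp_all add: hs_pair_props elems_hs_act)

lemma hs_act_hs_kpair:
  "infinite (UNIV :: 'k set) \<Longrightarrow>
   hs_act h (hs_kpair u v) = (hs_kpair (hs_act h u) (hs_act h v) :: ('a, 'k) hs)"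
  by (simp add: hs_kpair_def hs_act_hs_pair hs_act_hs_sing)

lemma ex_hs_set_of_hs_kpairs:
  assumes inf: "infinite (UNIV :: 'k set)" and r: "r \<subseteq> elems S \<times> elems (S :: ('a, 'k) hs)"
  obtains R :: "('a, 'k) hs" where "\<not> is_atom R" "elems R = (\<lambda>(u, v). hs_kpair u v) ` r"
proof -
  obtain K and F :: "'k \<Rightarrow> ('a, 'k) hs" where S: "elems S = F ` K" by (rule elems_eq_image)
  obtain s :: "'k \<Rightarrow> 'k \<times> 'k" where "bij s"
    using card_of_ordIso[THEN iffD2, OF ordIso_symmetric[OF card_of_Times_same_infinite[OF inf]]]
    by auto
  have "(\<lambda>(u, v). hs_kpair u v) ` r \<subseteq> range (\<lambda>k. hs_kpair (F (fst (s k))) (F (snd (s k))))"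
  proof clarify
    fix u v assume "(u, v) \<in> r"
    then have "u \<in> F ` K" "v \<in> F ` K" using r S by auto
    then obtain k1 k2 where "u = F k1" "v = F k2" by auto
    moreover obtain k where "s k = (k1, k2)" using \<open>bij s\<close> by (metis bij_pointE)
    ultimately show "hs_kpair u v \<in> range (\<lambda>k. hs_kpair (F (fst (s k))) (F (snd (s k))))"
      by (auto intro!: range_eqI[of _ _ k])
  qed
  from ex_hs_set[OF this] show ?thesis using that by blast
qed

sublocale group_action \<subseteq> group G
  using group_hom group_hom.axioms(1) by blast

context group_action
begin

lemma hs_act_one: "inV E x \<Longrightarrow> hs_act (\<phi> \<one>) x = x"
  unfolding inV_def using id_eq_one
  by (metis (no_types, lifting) hs_act_cong hs_act_ident restrict_apply' subsetD)

lemma hs_act_mult: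
  "inV E x \<Longrightarrow> g \<in> carrier G \<Longrightarrow> h \<in> carrier G \<Longrightarrow>
   hs_act (\<phi> (g \<otimes> h)) x = hs_act (\<phi> g) (hs_act (\<phi> h) x)"
  unfolding hs_act_comp inV_def by (intro hs_act_cong) (auto simp: composition_rule)

lemma hs_act_inv_cancel:
  "inV E x \<Longrightarrow> g \<in> carrier G \<Longrightarrow> hs_act (\<phi> (inv g)) (hs_act (\<phi> g) x) = x"
  by (metis hs_act_mult hs_act_one inv_closed l_inv)

lemma inj_on_hs_act: "g \<in> carrier G \<Longrightarrow> inj_on (hs_act (\<phi> g)) {x. inV E x}"
  by (rule inj_onI) (metis hs_act_inv_cancel mem_Collect_eq)

lemma pstab_subgroup:
  assumes "a \<subseteq> E" shows "subgroup (pstab G \<phi> a) G"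
proof -
  have "pstab G \<phi> a = \<Inter> (insert (carrier G) (stabilizer G \<phi> ` a))"
    by (auto simp: pstab_def stabilizer_def)
  also have "subgroup \<dots> G"
    by (rule subgroups_Inter) (use assms stabilizer_subgroup subgroup_self in auto)
  finally show ?thesis .
qed

lemma group_action_hs_act:
  assumes S: "S \<subseteq> {x. inV E x}"
    and S_invariant: "\<And>g. g \<in> carrier G \<Longrightarrow> hs_act (\<phi> g) ` S \<subseteq> S"
  shows "group_action G S (\<lambda>g. restrict (hs_act (\<phi> g)) S)"
proof -
  have onto: "hs_act (\<phi> g) ` S = S" if "g \<in> carrier G" for g
  proof
    show "S \<subseteq> hs_act (\<phi> g) ` S"
    proof
      fix y assume "y \<in> S"
      then have "hs_act (\<phi> (inv g)) y \<in> S" "y = hs_act (\<phi> g) (hs_act (\<phi> (inv g)) y)"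
        using S_invariant S that hs_act_inv_cancel[of y "inv g"] by (auto simp: inv_inv)
      then show "y \<in> hs_act (\<phi> g) ` S" by blast
    qed
  qed (rule S_invariant[OF that])
  have bij: "restrict (hs_act (\<phi> g)) S \<in> Bij S" if "g \<in> carrier G" for g
    using onto[OF that] inj_on_subset[OF inj_on_hs_act[OF that] S]
    by (simp add: Bij_def bij_betw_def inj_on_def)
  have mult: "restrict (hs_act (\<phi> (g \<otimes> h))) S =
      compose S (restrict (hs_act (\<phi> g)) S) (restrict (hs_act (\<phi> h)) S)"
    if "g \<in> carrier G" "h \<in> carrier G" for g h
    unfolding compose_def
    by (intro restrict_ext) (use that S S_invariant in \<open>auto simp: hs_act_mult image_subset_iff\<close>)
  show ?thesis
    unfolding group_action_def group_hom_def group_hom_axioms_def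
    using bij mult group_BijGroup[of S] by (auto simp: is_group hom_def BijGroup_def)
qed

lemma normal_pointwise_fixer:
  assumes "S \<subseteq> {x. inV E x}" "\<And>g. g \<in> carrier G \<Longrightarrow> hs_act (\<phi> g) ` S \<subseteq> S"
  shows "{g \<in> carrier G. \<forall>x\<in>S. hs_act (\<phi> g) x = x} \<lhd> G"
proof -
  interpret S: group_action G S "\<lambda>g. restrict (hs_act (\<phi> g)) S"
    using assms by (rule group_action_hs_act)
  have "kernel G (BijGroup S) (\<lambda>g. restrict (hs_act (\<phi> g)) S) =
      {g \<in> carrier G. \<forall>x\<in>S. hs_act (\<phi> g) x = x}"
    by (auto simp: kernel_def BijGroup_def fun_eq_iff restrict_def)
  then show ?thesis
    using group_hom.normal_kernel[OF S.group_hom] by simp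
qed

end

lemma well_order_automorphism_id:
  assumes wo: "well_order_on S r" and bij: "bij_betw \<sigma> S S"
    and mono: "\<And>x y. (x, y) \<in> r \<Longrightarrow> (\<sigma> x, \<sigma> y) \<in> r"
    and "x \<in> S"
  shows "\<sigma> x = x"
proof (rule ccontr)
  assume "\<sigma> x \<noteq> x"
  then have ne: "{x\<in>S. \<sigma> x \<noteq> x} \<noteq> {}" using \<open>x \<in> S\<close> by blast
  have wf: "wf (r - Id)" and tot: "total_on S r" and anti: "antisym r"
    using wo by (auto simp: well_order_on_def linear_order_on_def partial_order_on_def)
  obtain m where m: "m \<in> S" "\<sigma> m \<noteq> m"
    and min: "\<And>y. (y, m) \<in> r - Id \<Longrightarrow> y \<notin> {x\<in>S. \<sigma> x \<noteq> x}"
    using wfE_min[OF wf, of _ "{x\<in>S. \<sigma> x \<noteq> x}"] ne by blast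
  have img: "\<sigma> ` S = S" and inj: "inj_on \<sigma> S" using bij by (auto simp: bij_betw_def)
  have "\<sigma> m \<in> S" using img m(1) by blast
  then consider "(\<sigma> m, m) \<in> r" | "(m, \<sigma> m) \<in> r"
    using tot m by (auto simp: total_on_def)
  then show False
  proof cases
    case 1
    then have "\<sigma> (\<sigma> m) = \<sigma> m" using min[of "\<sigma> m"] m \<open>\<sigma> m \<in> S\<close> by auto
    then show False using inj m \<open>\<sigma> m \<in> S\<close> by (meson inj_on_eq_iff)
  next
    case 2
    obtain y where y: "y \<in> S" "\<sigma> y = m" using img m(1) by (metis imageE)
    then have "y \<noteq> m" using m(2) by auto
    then consider "(y, m) \<in> r" | "(m, y) \<in> r" using tot y(1) m(1) by (auto simp: total_on_def)
    then show False
    proof cases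
      case 1
      then show False using min[of y] y \<open>y \<noteq> m\<close> by auto
    next
      case 2
      then have "(\<sigma> m, m) \<in> r" using mono y(2) by metis
      then show False using anti \<open>(m, \<sigma> m) \<in> r\<close> m(2) by (metis antisymD)
    qed
  qed
qed

definition supports ::
  "('g, 'b) monoid_scheme \<Rightarrow> ('g \<Rightarrow> 'a \<Rightarrow> 'a) \<Rightarrow> 'a set \<Rightarrow> ('a, 'k) hs \<Rightarrow> bool" where
  "supports G \<phi> a Z \<longleftrightarrow> pstab G \<phi> a \<subseteq> stab G \<phi> Z"

lemma supports_iff: "supports G \<phi> a Z \<longleftrightarrow> (\<forall>g\<in>pstab G \<phi> a. hs_act (\<phi> g) Z = Z)"
  unfolding supports_def pstab_def stab_def by blast

lemma supports_mono: "a \<subseteq> b \<Longrightarrow> supports G \<phi> a Z \<Longrightarrow> supports G \<phi> b Z"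
  unfolding supports_def pstab_def by blast

lemma symmetric_iff_supports: "symmetric G \<phi> I Z \<longleftrightarrow> (\<exists>a\<in>I. supports G \<phi> a Z)"
  by (simp add: symmetric_def supports_def)

lemma ex_common_support:
  assumes "\<forall>a\<in>I. \<forall>b\<in>I. a \<union> b \<in> I" "symmetric G \<phi> I Y" "symmetric G \<phi> I Z"
  obtains a where "a \<in> I" "supports G \<phi> a Y" "supports G \<phi> a Z"
proof -
  obtain b c where "b \<in> I" "supports G \<phi> b Y" "c \<in> I" "supports G \<phi> c Z"
    using assms(2,3) unfolding symmetric_iff_supports by blast
  then show ?thesis
    using that[of "b \<union> c"] assms(1) supports_mono[of b "b \<union> c"] supports_mono[of c "b \<union> c"] by blast
qed

lemma supports_setI: "\<not> is_atom x \<Longrightarrow> \<forall>y\<in>elems x. supports G \<phi> a y \<Longrightarrow> supports G \<phi> a x"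
  unfolding supports_iff by (blast intro: hs_act_fixed_setI)

context group_action
begin

lemma elems_supported_if_order_supported:
  assumes inf: "infinite (UNIV :: 'k set)"
    and wo: "well_order_on (elems B) (rel_on R B)" and "inV E (B :: (_, 'k) hs)"
    and "supports G \<phi> a R" "supports G \<phi> a B"
    and x: "x \<in> elems B"
  shows "supports G \<phi> a x"
  unfolding supports_iff
proof
  fix g assume "g \<in> pstab G \<phi> a"
  then have g: "g \<in> carrier G" and fixed: "hs_act (\<phi> g) R = R" "hs_act (\<phi> g) B = B"
    using \<open>supports G \<phi> a R\<close> \<open>supports G \<phi> a B\<close> by (auto simp: supports_iff pstab_def)
  show "hs_act (\<phi> g) x = x"
  proof (rule well_order_automorphism_id[OF wo _ _ x])
    have "elems B \<subseteq> {x. inV E x}" using \<open>inV E B\<close> inV_elem by blast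
    then have "inj_on (hs_act (\<phi> g)) (elems B)" by (rule inj_on_subset[OF inj_on_hs_act[OF g]])
    moreover have "hs_act (\<phi> g) ` elems B = elems B" using fixed(2) by (simp flip: elems_hs_act)
    ultimately show "bij_betw (hs_act (\<phi> g)) (elems B) (elems B)" by (simp add: bij_betw_def)
  next
    fix u v assume "(u, v) \<in> rel_on R B"
    then have "u \<in> elems B" "v \<in> elems B" "hs_kpair u v \<in> elems R" by (simp_all add: rel_on_hs_kpair[OF inf])
    then have "hs_act (\<phi> g) u \<in> elems B" "hs_act (\<phi> g) v \<in> elems B"
        "hs_kpair (hs_act (\<phi> g) u) (hs_act (\<phi> g) v) \<in> elems R"
      using fixed by (metis elems_hs_act hs_act_hs_kpair[OF inf] imageI)+
    then show "(hs_act (\<phi> g) u, hs_act (\<phi> g) v) \<in> rel_on R B" by (simp add: rel_on_hs_kpair[OF inf])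
  qed
qed

lemma good_set_supports_elems:
  assumes inf: "infinite (UNIV :: 'k set)"
    and IE: "I \<subseteq> Pow E" and I_Un: "\<forall>a\<in>I. \<forall>b\<in>I. a \<union> b \<in> I"
    and "a \<in> I" and good: "good_set G \<phi> I a"
    and "inV E (B :: (_, 'k) hs)" and "symmetric G \<phi> I B" and "wo_in_W G E \<phi> I B"
    and "supports G \<phi> a B" and x: "x \<in> elems B"
  shows "supports G \<phi> a x"
proof -
  let ?N = "{g \<in> pstab G \<phi> a. \<forall>x\<in>elems B. hs_act (\<phi> g) x = x}"
  have "a \<subseteq> E" using IE \<open>a \<in> I\<close> by blast
  interpret P: group_action "G\<lparr>carrier := pstab G \<phi> a\<rparr>" E \<phi>
    by (rule induced_action[OF pstab_subgroup[OF \<open>a \<subseteq> E\<close>]])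
  have "?N \<lhd> G\<lparr>carrier := pstab G \<phi> a\<rparr>"
    using P.normal_pointwise_fixer[of "elems B"] \<open>inV E B\<close> \<open>supports G \<phi> a B\<close>
    by (simp add: inV_elem subset_iff supports_iff flip: elems_hs_act)
  obtain R where "inW G E \<phi> I R" and wo: "well_order_on (elems B) (rel_on R B)"
    using \<open>wo_in_W G E \<phi> I B\<close> unfolding wo_in_W_def by blast
  then have "symmetric G \<phi> I R" unfolding inW_def by blast
  then obtain c where "c \<in> I" "supports G \<phi> c R" "supports G \<phi> c B"
    using ex_common_support I_Un \<open>symmetric G \<phi> I B\<close> by metis
  let ?d = "a \<union> c"
  have "?d \<in> I" using I_Un \<open>a \<in> I\<close> \<open>c \<in> I\<close> by blast
  have "supports G \<phi> ?d y" if "y \<in> elems B" for y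
    using elems_supported_if_order_supported[OF inf wo \<open>inV E B\<close> _ _ that]
      supports_mono[of c ?d] \<open>supports G \<phi> c R\<close> \<open>supports G \<phi> c B\<close> by blast
  then have "pstab G \<phi> ?d \<subseteq> ?N" by (auto simp: supports_iff pstab_def)
  then have "?N = pstab G \<phi> a"
    using good \<open>?d \<in> I\<close> \<open>?N \<lhd> _\<close> unfolding good_set_def by blast
  then show ?thesis using x by (auto simp: supports_iff)
qed

end

abbreviation hs_mem_rel :: "(('a, 'k) hs \<times> ('a, 'k) hs) set" where
  "hs_mem_rel \<equiv> {(x, y). hs_mem x y}"

lemma inW_elem:
  assumes "inW G X \<phi> I A" "B \<in> elems A" shows "inW G X \<phi> I B"
proof -
  have "(B, A) \<in> hs_mem_rel\<^sup>+" "\<And>C. (C, B) \<in> hs_mem_rel\<^sup>+ \<Longrightarrow> (C, A) \<in> hs_mem_rel\<^sup>+"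
    using assms(2) by (auto simp: mem_elems_iff intro: trancl_into_trancl)
  then show ?thesis using assms inV_elem unfolding inW_def by blast
qed

lemma inW_setI:
  assumes "\<not> is_atom x" "symmetric G \<phi> I x" "\<forall>y\<in>elems x. inW G X \<phi> I y"
  shows "inW G X \<phi> I x"
proof -
  have "symmetric G \<phi> I z" if z: "(z, x) \<in> hs_mem_rel\<^sup>+" for z
  proof -
    obtain y where "(z, y) \<in> hs_mem_rel\<^sup>*" "y \<in> elems x"
      using tranclD2[OF z] by (auto simp: mem_elems_iff)
    then show ?thesis using assms(3) unfolding inW_def by (auto dest: rtranclD)
  qed
  then show ?thesis
    using assms inV_setI unfolding inW_def by blast
qed

lemma inW_supported_setI:
  assumes "a \<in> I" "\<not> is_atom x" "\<forall>y\<in>elems x. inW G X \<phi> I y \<and> supports G \<phi> a y"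
  shows "inW G X \<phi> I x"
proof (rule inW_setI)
  show "symmetric G \<phi> I x"
    unfolding symmetric_iff_supports using assms supports_setI by blast
qed (use assms in blast)+

lemma inW_hs_kpair:
  assumes inf: "infinite (UNIV :: 'k set)" and "a \<in> I"
    and "inW G X \<phi> I u" "inW G X \<phi> I v" "supports G \<phi> a u" "supports G \<phi> a v"
  shows "inW G X \<phi> I (hs_kpair u v :: ('a, 'k) hs) \<and> supports G \<phi> a (hs_kpair u v)"
proof -
  have "inW G X \<phi> I (hs_sing u) \<and> supports G \<phi> a (hs_sing u)"
    by (intro conjI inW_supported_setI[OF \<open>a \<in> I\<close>] supports_setI)
      (use hs_sing_props[of u] assms in auto)
  moreover have "inW G X \<phi> I (hs_pair u v) \<and> supports G \<phi> a (hs_pair u v)"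
    by (intro conjI inW_supported_setI[OF \<open>a \<in> I\<close>] supports_setI)
      (use hs_pair_props[OF inf, of u v] assms in auto)
  ultimately show ?thesis
    unfolding hs_kpair_def
    by (intro conjI inW_supported_setI[OF \<open>a \<in> I\<close>] supports_setI)
      (use hs_pair_props[OF inf, of "hs_sing u" "hs_pair u v"] in auto)
qed

lemma wo_in_W_if_elems_supported:
  assumes inf: "infinite (UNIV :: 'k set)" and "a \<in> I" and "\<not> is_atom (S :: ('a, 'k) hs)"
    and elems_S: "\<forall>u\<in>elems S. inW G X \<phi> I u \<and> supports G \<phi> a u"
  shows "wo_in_W G X \<phi> I S"
proof -
  obtain r where wo: "well_order_on (elems S) r" using well_order_on by blast
  then have r: "r \<subseteq> elems S \<times> elems S" using well_order_on_domain by fast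
  obtain R :: "('a, 'k) hs" where R: "\<not> is_atom R" "elems R = (\<lambda>(u, v). hs_kpair u v) ` r"
    by (rule ex_hs_set_of_hs_kpairs[OF inf r])
  have "rel_on R S = r"
    using r by (auto simp: rel_on_hs_kpair[OF inf] R(2) hs_kpair_inject[OF inf])
  moreover have "inW G X \<phi> I R"
  proof (rule inW_supported_setI[OF \<open>a \<in> I\<close> R(1)], unfold R(2), clarify)
    fix u v assume "(u, v) \<in> r"
    then have "u \<in> elems S" "v \<in> elems S" using r by auto
    then show "inW G X \<phi> I (hs_kpair u v) \<and> supports G \<phi> a (hs_kpair u v)"
      using inW_hs_kpair[OF inf \<open>a \<in> I\<close>, of G X \<phi> u v] elems_S by simp
  qed
  ultimately show ?thesis
    unfolding wo_in_W_def using assms(3) wo by auto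
qed

theorem mainTheorem13:
  fixes G :: "('g, 'b) monoid_scheme" and X :: "'a set" and \<phi> :: "'g \<Rightarrow> 'a \<Rightarrow> 'a"
    and I :: "'a set set" and A U :: "('a, 'k) hs"
  assumes "infinite (UNIV :: 'k set)"
    and "almost_simple G X \<phi> I"
    and "inW G X \<phi> I A"
    and "wo_in_W G X \<phi> I A"
    and "\<forall>B \<in> elems A. wo_in_W G X \<phi> I B"
    and "\<not> is_atom U"
    and "elems U = (\<Union>B \<in> elems A. elems B)"
  shows "wo_in_W G X \<phi> I U"
proof -
  have act: "group_action G X \<phi>" and IX: "I \<subseteq> Pow X" and I_Un: "\<forall>a\<in>I. \<forall>b\<in>I. a \<union> b \<in> I"
    and good: "\<forall>c\<in>I. \<exists>a\<in>I. c \<subseteq> a \<and> good_set G \<phi> I a"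
    using assms(2) unfolding almost_simple_def dynamical_ideal_def by auto
  obtain RA where "inW G X \<phi> I RA" and wo: "well_order_on (elems A) (rel_on RA A)"
    using assms(4) unfolding wo_in_W_def by blast
  then obtain c where "c \<in> I" "supports G \<phi> c RA" "supports G \<phi> c A"
    using ex_common_support[OF I_Un] assms(3) unfolding inW_def by metis
  then obtain a where "a \<in> I" "good_set G \<phi> I a" "supports G \<phi> a RA" "supports G \<phi> a A"
    using good supports_mono by metis
  have "inW G X \<phi> I u \<and> supports G \<phi> a u" if "u \<in> elems U" for u
  proof -
    obtain B where B: "B \<in> elems A" "u \<in> elems B" using assms(7) \<open>u \<in> elems U\<close> by blast
    then have "inW G X \<phi> I B" "supports G \<phi> a B"
      using group_action.elems_supported_if_order_supported[OF act assms(1) wo] assms(3) inW_elem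
        \<open>supports G \<phi> a RA\<close> \<open>supports G \<phi> a A\<close> unfolding inW_def by blast+
    then show ?thesis
      using group_action.good_set_supports_elems[OF act assms(1) IX I_Un \<open>a \<in> I\<close> \<open>good_set _ _ _ a\<close>]
        assms(5) B inW_elem unfolding inW_def by blast
  qed
  then show ?thesis
    using wo_in_W_if_elems_supported[OF assms(1) \<open>a \<in> I\<close> assms(6)] by blast
qed

end
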